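(* An $Ł_n$-valued effectivity function $E:\mathcal P N\times Ł_n^S\to Ł_n$ is playable if and only if it is semi-playable, homogeneous, regular and $N$-maximal.
   Context: For a positive integer $n$ let $Ł_n=\{0,\frac1n,\dots,1\}$ with $\neg x=1-x$, $x\oplus y=\min(x+y,1)$, $x\odot y=\max(x+y-1,0)$, $\wedge=\min$, $\vee=\max$, applied pointwise on $Ł_n^S$; $0,1$ also denote constant functions. Standing assumptions: $N$ finite, $|N|\ge2$, $|S|\ge2$; $\overline C=N\setminus C$. An $Ł_n$-valued effectivity function is any map $E:\mathcal P N\times Ł_n^S\to Ł_n$. It is: outcome monotonic if $f\ge g$ implies $E(C,f)\ge E(C,g)$; $N$-maximal if $\neg E(\varnothing,\neg f)\le E(N,f)$; regular if $E(C,f)\le\neg E(\overline C,\neg f)$ for all $C,f$; superadditive if $E(C_1,f)\wedge E(C_2,g)\le E(C_1\cup C_2,f\wedge g)$ whenever $C_1\cap C_2=\varnothing$; homogeneous if $E(C,f\oplus f)=E(C,f)\oplus E(C,f)$ and $E(C,f\odot f)=E(C,f)\odot E(C,f)$; has liveness if $E(C,1)=1$ for all $C$; has safety if $E(C,0)=0$ for all $C$. Playable: outcome monotonic, $N$-maximal, superadditive, homogeneous, liveness and safety. $E$ is semi-playable if $E(C,f)\le E(C,g)$ for all $f\le g$ and all $C\ne N$, $E(C,1)=1$ and $E(C,0)=0$ for all $C\ne N$, and $E(C_1,f)\wedge E(C_2,g)\le E(C_1\cup C_2,f\wedge g)$ for all $f,g$ and all $C_1,C_2$ with $C_1\cap C_2=\varnothing$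 and $C_1\cup C_2\ne N$. *)

theory Defs
  imports "HOL-Library.FuncSet" Complex_Main
begin

definition Ln :: "nat \<Rightarrow> real set" where
  "Ln n = {real k / real n | k. k \<le> n}"

definition LnF :: "nat \<Rightarrow> 's set \<Rightarrow> ('s \<Rightarrow> real) set" where
  "LnF n S = S \<rightarrow>\<^sub>E Ln n"

definition mv_oplus :: "real \<Rightarrow> real \<Rightarrow> real" where
  "mv_oplus x y = min (x + y) 1"

definition mv_odot :: "real \<Rightarrow> real \<Rightarrow> real" where
  "mv_odot x y = max (x + y - 1) 0"

definition fneg :: "'s set \<Rightarrow> ('s \<Rightarrow> real) \<Rightarrow> ('s \<Rightarrow> real)" where
  "fneg S f = (\<lambda>s\<in>S. 1 - f s)"

definition foplus :: "'s set \<Rightarrow> ('s \<Rightarrow> real) \<Rightarrow> ('s \<Rightarrow> real) \<Rightarrow> ('s \<Rightarrow> real)" where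
  "foplus S f g = (\<lambda>s\<in>S. mv_oplus (f s) (g s))"

definition fodot :: "'s set \<Rightarrow> ('s \<Rightarrow> real) \<Rightarrow> ('s \<Rightarrow> real) \<Rightarrow> ('s \<Rightarrow> real)" where
  "fodot S f g = (\<lambda>s\<in>S. mv_odot (f s) (g s))"

definition fmin :: "'s set \<Rightarrow> ('s \<Rightarrow> real) \<Rightarrow> ('s \<Rightarrow> real) \<Rightarrow> ('s \<Rightarrow> real)" where
  "fmin S f g = (\<lambda>s\<in>S. min (f s) (g s))"

definition fconst :: "'s set \<Rightarrow> real \<Rightarrow> ('s \<Rightarrow> real)" where
  "fconst S c = (\<lambda>s\<in>S. c)"

definition fle :: "'s set \<Rightarrow> ('s \<Rightarrow> real) \<Rightarrow> ('s \<Rightarrow> real) \<Rightarrow> bool" where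
  "fle S f g \<longleftrightarrow> (\<forall>s\<in>S. f s \<le> g s)"

definition eff_fun :: "nat \<Rightarrow> 'a set \<Rightarrow> 's set \<Rightarrow> ('a set \<Rightarrow> ('s \<Rightarrow> real) \<Rightarrow> real) \<Rightarrow> bool" where
  "eff_fun n N S E \<longleftrightarrow> (\<forall>C\<subseteq>N. \<forall>f\<in>LnF n S. E C f \<in> Ln n)"

definition outcome_monotonic where
  "outcome_monotonic n N S E \<longleftrightarrow>
     (\<forall>C\<subseteq>N. \<forall>f\<in>LnF n S. \<forall>g\<in>LnF n S. fle S g f \<longrightarrow> E C g \<le> E C f)"

definition N_maximal where
  "N_maximal n N S E \<longleftrightarrow> (\<forall>f\<in>LnF n S. 1 - E {} (fneg S f) \<le> E N f)"

definition regular where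
  "regular n N S E \<longleftrightarrow> (\<forall>C\<subseteq>N. \<forall>f\<in>LnF n S. E C f \<le> 1 - E (N - C) (fneg S f))"

definition superadditive where
  "superadditive n N S E \<longleftrightarrow>
     (\<forall>C1\<subseteq>N. \<forall>C2\<subseteq>N. \<forall>f\<in>LnF n S. \<forall>g\<in>LnF n S. C1 \<inter> C2 = {} \<longrightarrow>
        min (E C1 f) (E C2 g) \<le> E (C1 \<union> C2) (fmin S f g))"

definition homogeneous where
  "homogeneous n N S E \<longleftrightarrow>
     (\<forall>C\<subseteq>N. \<forall>f\<in>LnF n S.
        E C (foplus S f f) = mv_oplus (E C f) (E C f) \<and>
        E C (fodot S f f) = mv_odot (E C f) (E C f))"

definition liveness where
  "liveness n N S E \<longleftrightarrow> (\<forall>C\<subseteq>N. E C (fconst S 1) = 1)"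

definition safety where
  "safety n N S E \<longleftrightarrow> (\<forall>C\<subseteq>N. E C (fconst S 0) = 0)"

definition playable where
  "playable n N S E \<longleftrightarrow> outcome_monotonic n N S E \<and> N_maximal n N S E \<and>
     superadditive n N S E \<and> homogeneous n N S E \<and> liveness n N S E \<and> safety n N S E"

definition semi_playable where
  "semi_playable n N S E \<longleftrightarrow>
     (\<forall>C\<subseteq>N. C \<noteq> N \<longrightarrow> (\<forall>f\<in>LnF n S. \<forall>g\<in>LnF n S. fle S f g \<longrightarrow> E C f \<le> E C g)) \<and>
     (\<forall>C\<subseteq>N. C \<noteq> N \<longrightarrow> E C (fconst S 1) = 1 \<and> E C (fconst S 0) = 0) \<and>
     (\<forall>C1\<subseteq>N. \<forall>C2\<subseteq>N. \<forall>f\<in>LnF n S. \<forall>g\<in>LnF n S. C1 \<inter> C2 = {} \<longrightarrow> C1 \<union> C2 \<noteq> N \<longrightarrow>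
        min (E C1 f) (E C2 g) \<le> E (C1 \<union> C2) (fmin S f g))"

end

theory Submission
  imports Defs
begin

text \<open>Homogeneity says that E commutes with the unary MV-terms built from x \<oplus> x and x \<odot> x.
  Any two distinct points of L_n are separated by such a term that moreover maps all of L_n
  into {0, 1}. Applying the term to the arguments of E turns a violation of regularity (resp.
  of superadditivity at the grand coalition) into one with Boolean arguments and values 0 and 1,
  where the other axioms lead to E N 0 = 1 (resp. a monotonicity clash).\<close>

fun mv_iter :: "bool list \<Rightarrow> real \<Rightarrow> real" where
  "mv_iter [] x = x"
| "mv_iter (b # bs) x = mv_iter bs (if b then mv_oplus x x else mv_odot x x)"

lemma mv_iter_append: "mv_iter (bs @ cs) x = mv_iter cs (mv_iter bs x)"
  by (induction bs arbitrary: x) auto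

lemma mv_iter_mono: "x \<le> y \<Longrightarrow> mv_iter bs x \<le> mv_iter bs y"
proof (induction bs arbitrary: x y)
  case (Cons b bs)
  have "mv_oplus x x \<le> mv_oplus y y" "mv_odot x x \<le> mv_odot y y"
    using Cons.prems by (auto simp: mv_oplus_def mv_odot_def)
  then show ?case using Cons.IH by auto
qed simp

lemma mv_iter_min: "mv_iter bs (min x y) = min (mv_iter bs x) (mv_iter bs y)"
  by (metis min.absorb_iff1 min.commute mv_iter_mono nle_le)

lemma mv_iter_dual: "mv_iter (map Not bs) (1 - x) = 1 - mv_iter bs x"
proof (induction bs arbitrary: x)
  case (Cons b bs)
  have "mv_odot (1 - x) (1 - x) = 1 - mv_oplus x x" "mv_oplus (1 - x) (1 - x) = 1 - mv_odot x x"
    by (auto simp: mv_oplus_def mv_odot_def)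
  then show ?case using Cons.IH[of "mv_oplus x x"] Cons.IH[of "mv_odot x x"] by simp
qed simp

lemma mv_iter_replicate_oplus:
  assumes "0 \<le> x" "x \<le> 1"
  shows "mv_iter (replicate m True) x = min (2 ^ m * x) 1"
  using assms
proof (induction m arbitrary: x)
  case (Suc m)
  have "mv_iter (replicate (Suc m) True) x = min (2 ^ m * min (2 * x) 1) 1"
    using Suc by (simp add: mv_oplus_def)
  also have "\<dots> = min (2 ^ Suc m * x) 1"
  proof (cases "2 * x \<le> 1")
    case False
    have "(1::real) \<le> 2 ^ m" by simp
    then have "2 * x \<le> 2 ^ Suc m * x" using Suc.prems by (simp add: mult_le_cancel_right1)
    then have "1 < 2 ^ Suc m * x" using False by linarith
    then have "min (2 ^ Suc m * x) 1 = 1" by (auto simp: min_def)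
    moreover have "min (2 ^ m * min (2 * x) 1) 1 = (1::real)" using False \<open>1 \<le> 2 ^ m\<close> by simp
    ultimately show ?thesis by simp
  qed (simp add: mult.assoc)
  finally show ?case .
qed simp

text \<open>Doubling the distance at each step: below 1/2 use x \<oplus> x, above 1/2 use x \<odot> x,
  and when x < 1/2 < y a single x \<odot> x already separates.\<close>
lemma mv_iter_separates:
  assumes "0 \<le> x" "y \<le> 1" "(1/2) ^ k < y - x"
  shows "\<exists>bs. mv_iter bs x = 0 \<and> 0 < mv_iter bs y"
  using assms
proof (induction k arbitrary: x y)
  case (Suc k)
  have "0 < (1/2::real) ^ Suc k" by simp
  then have "x < y" using Suc.prems(3) by linarith
  consider "1/2 \<le> x" | "y \<le> 1/2" | "x < 1/2" "1/2 < y" by linarith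
  then show ?case
  proof cases
    case 1
    then have "mv_odot x x = 2 * x - 1" "mv_odot y y = 2 * y - 1"
      using \<open>x < y\<close> by (auto simp: mv_odot_def)
    moreover obtain bs where "mv_iter bs (2 * x - 1) = 0" "0 < mv_iter bs (2 * y - 1)"
      using Suc.IH[of "2 * x - 1" "2 * y - 1"] Suc.prems 1 by auto
    ultimately show ?thesis by (intro exI[of _ "False # bs"]) simp
  next
    case 2
    then have "mv_oplus x x = 2 * x" "mv_oplus y y = 2 * y"
      using \<open>x < y\<close> by (auto simp: mv_oplus_def)
    moreover obtain bs where "mv_iter bs (2 * x) = 0" "0 < mv_iter bs (2 * y)"
      using Suc.IH[of "2 * x" "2 * y"] Suc.prems 2 by auto
    ultimately show ?thesis by (intro exI[of _ "True # bs"]) simp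
  next
    case 3
    then show ?thesis by (intro exI[of _ "[False]"]) (simp add: mv_odot_def)
  qed
qed simp

lemma Ln_iff: "x \<in> Ln n \<longleftrightarrow> (\<exists>k\<le>n. x = real k / real n)"
  by (auto simp: Ln_def)

lemma Ln_bounds: "0 < n \<Longrightarrow> x \<in> Ln n \<Longrightarrow> 0 \<le> x \<and> x \<le> 1"
  by (auto simp: Ln_iff)

lemma zero_in_Ln: "0 \<in> Ln n"
  by (auto simp: Ln_iff intro: exI[of _ 0])

lemma one_in_Ln: "0 < n \<Longrightarrow> 1 \<in> Ln n"
  by (auto simp: Ln_iff intro!: exI[of _ n])

lemma one_minus_in_Ln:
  assumes "0 < n" "x \<in> Ln n"
  shows "1 - x \<in> Ln n"
proof -
  obtain k where "k \<le> n" "x = real k / real n" using assms(2) by (auto simp: Ln_iff)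
  then have "1 - x = real (n - k) / real n" using assms(1) by (simp add: field_simps of_nat_diff)
  then show ?thesis unfolding Ln_iff by (intro exI[of _ "n - k"]) auto
qed

lemma mv_oplus_self_in_Ln:
  assumes "0 < n" "x \<in> Ln n"
  shows "mv_oplus x x \<in> Ln n"
proof -
  obtain k where k: "k \<le> n" "x = real k / real n" using assms(2) by (auto simp: Ln_iff)
  then have sum: "x + x = real (2 * k) / real n" by (simp add: add_divide_distrib)
  show ?thesis
  proof (cases "2 * k \<le> n")
    case True
    then have "mv_oplus x x = real (2 * k) / real n"
      using assms(1) sum by (simp add: mv_oplus_def)
    then show ?thesis using True Ln_iff by blast
  next
    case False
    then have "mv_oplus x x = 1" using assms(1) sum by (simp add: mv_oplus_def)
    then show ?thesis using one_in_Ln[OF assms(1)] by simp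
  qed
qed

lemma mv_odot_self_in_Ln:
  assumes "0 < n" "x \<in> Ln n"
  shows "mv_odot x x \<in> Ln n"
proof -
  have "mv_odot x x = 1 - mv_oplus (1 - x) (1 - x)"
    by (auto simp: mv_oplus_def mv_odot_def)
  then show ?thesis
    using assms by (simp add: one_minus_in_Ln mv_oplus_self_in_Ln)
qed

lemma mv_iter_in_Ln: "0 < n \<Longrightarrow> x \<in> Ln n \<Longrightarrow> mv_iter bs x \<in> Ln n"
  by (induction bs arbitrary: x) (auto simp: mv_oplus_self_in_Ln mv_odot_self_in_Ln)

lemma Ln_diff_ge:
  assumes "0 < n" "x \<in> Ln n" "y \<in> Ln n" "x < y"
  shows "1 / real n \<le> y - x"
proof -
  obtain k j where k: "x = real k / real n" and j: "y = real j / real n"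
    using assms(2,3) by (auto simp: Ln_iff)
  then have "k < j" using assms(1,4) by (auto simp: divide_less_cancel)
  then have "y - x = real (j - k) / real n" using k j by (simp add: of_nat_diff diff_divide_distrib)
  then show ?thesis using \<open>k < j\<close> assms(1) by (simp add: divide_right_mono)
qed

text \<open>n doublings send every nonzero point of L_n, which is at least 1/n, to 1.\<close>
lemma mv_iter_replicate_oplus_Ln:
  assumes "0 < n" "w \<in> Ln n"
  shows "mv_iter (replicate n True) w = (if w = 0 then 0 else 1)"
proof (cases "w = 0")
  case False
  have "1 / real n \<le> w" using Ln_diff_ge[OF assms(1) zero_in_Ln assms(2)] False Ln_bounds[OF assms] by simp
  then have "1 \<le> real n * w" using assms(1) by (simp add: divide_le_eq mult.commute)
  moreover have "real n \<le> 2 ^ n" by (metis less_exp less_imp_le of_nat_le_iff of_nat_numeral of_nat_power)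
  ultimately have "1 \<le> 2 ^ n * w" using Ln_bounds[OF assms] by (meson mult_right_mono order_trans)
  then show ?thesis using mv_iter_replicate_oplus Ln_bounds[OF assms] False by simp
qed (simp add: mv_iter_replicate_oplus)

lemma Ln_separating_term:
  assumes n: "0 < n" and x: "x \<in> Ln n" and y: "y \<in> Ln n" and "x < y"
  obtains bs where "mv_iter bs x = 0" "mv_iter bs y = 1"
    "\<And>z. z \<in> Ln n \<Longrightarrow> mv_iter bs z = 0 \<or> mv_iter bs z = 1"
proof -
  have "real n < 2 ^ n" by (metis less_exp of_nat_less_iff of_nat_numeral of_nat_power)
  then have "(1/2) ^ n < 1 / real n" using n by (simp add: power_one_over field_simps)
  also have "\<dots> \<le> y - x" using Ln_diff_ge[OF n x y \<open>x < y\<close>] .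
  finally obtain bs where bs: "mv_iter bs x = 0" "0 < mv_iter bs y"
    using mv_iter_separates Ln_bounds[OF n x] Ln_bounds[OF n y] by blast
  let ?bs = "bs @ replicate n True"
  have "mv_iter ?bs x = 0" "mv_iter ?bs y = 1"
    using bs mv_iter_replicate_oplus_Ln[OF n] zero_in_Ln mv_iter_in_Ln[OF n y]
    by (simp_all add: mv_iter_append)
  moreover have "mv_iter ?bs z = 0 \<or> mv_iter ?bs z = 1" if "z \<in> Ln n" for z
    using mv_iter_replicate_oplus_Ln[OF n mv_iter_in_Ln[OF n that]] by (simp add: mv_iter_append)
  ultimately show ?thesis using that by blast
qed

lemma LnF_restrict_iff: "(\<lambda>s\<in>S. h s) \<in> LnF n S \<longleftrightarrow> (\<forall>s\<in>S. h s \<in> Ln n)"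
  by (simp add: LnF_def restrict_PiE_iff Pi_iff)

lemma LnF_apply: "f \<in> LnF n S \<Longrightarrow> s \<in> S \<Longrightarrow> f s \<in> Ln n"
  by (auto simp: LnF_def)

lemma fneg_in_LnF: "0 < n \<Longrightarrow> f \<in> LnF n S \<Longrightarrow> fneg S f \<in> LnF n S"
  by (simp add: fneg_def LnF_restrict_iff LnF_apply one_minus_in_Ln)

lemma fmin_in_LnF: "f \<in> LnF n S \<Longrightarrow> g \<in> LnF n S \<Longrightarrow> fmin S f g \<in> LnF n S"
  by (simp add: fmin_def LnF_restrict_iff LnF_apply min_def)

lemma fconst_in_LnF: "c \<in> Ln n \<Longrightarrow> fconst S c \<in> LnF n S"
  by (simp add: fconst_def LnF_restrict_iff)

lemma mv_iter_comp_in_LnF: "0 < n \<Longrightarrow> f \<in> LnF n S \<Longrightarrow> (\<lambda>s\<in>S. mv_iter bs (f s)) \<in> LnF n S"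
  by (simp add: LnF_restrict_iff LnF_apply mv_iter_in_Ln)

lemma fneg_fconst: "fneg S (fconst S c) = fconst S (1 - c)"
  unfolding fneg_def fconst_def by (rule restrict_ext) simp

lemma homogeneous_mv_iter:
  assumes h: "homogeneous n N S E" and C: "C \<subseteq> N" and n: "0 < n" and f: "f \<in> LnF n S"
  shows "E C (\<lambda>s\<in>S. mv_iter bs (f s)) = mv_iter bs (E C f)"
  using f
proof (induction bs arbitrary: f)
  case Nil
  then have "(\<lambda>s\<in>S. f s) = f" by (simp add: LnF_def PiE_iff extensional_restrict)
  then show ?case by simp
next
  case (Cons b bs)
  define f' where "f' = (if b then foplus S f f else fodot S f f)"
  have f': "f' \<in> LnF n S" using Cons.prems n
    by (auto simp: f'_def foplus_def fodot_def LnF_restrict_iff LnF_apply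
        mv_oplus_self_in_Ln mv_odot_self_in_Ln)
  have "(\<lambda>s\<in>S. mv_iter (b # bs) (f s)) = (\<lambda>s\<in>S. mv_iter bs (f' s))"
    by (rule restrict_ext) (simp add: f'_def foplus_def fodot_def)
  moreover have "E C f' = (if b then mv_oplus (E C f) (E C f) else mv_odot (E C f) (E C f))"
    using h C Cons.prems unfolding homogeneous_def f'_def by auto
  ultimately show ?case using Cons.IH[OF f'] by simp
qed

context
  fixes n :: nat and N :: "'a set" and S :: "'s set" and E :: "'a set \<Rightarrow> ('s \<Rightarrow> real) \<Rightarrow> real"
  assumes n: "0 < n" and eff: "eff_fun n N S E"
begin

lemma eff_fun_in_Ln: "C \<subseteq> N \<Longrightarrow> f \<in> LnF n S \<Longrightarrow> E C f \<in> Ln n"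
  using eff by (auto simp: eff_fun_def)

lemma eff_fun_bounds: "C \<subseteq> N \<Longrightarrow> f \<in> LnF n S \<Longrightarrow> 0 \<le> E C f \<and> E C f \<le> 1"
  using eff_fun_in_Ln Ln_bounds[OF n] by blast

text \<open>If E C f + E (N - C) (\<not> f) > 1, a separating term t with t (1 - E (N - C) (\<not> f)) = 0
  gives a Boolean g = t \<circ> f with E C g = E (N - C) (\<not> g) = 1, while g \<and> \<not> g = 0.\<close>
lemma regular_if_playable:
  assumes sa: "superadditive n N S E" and ho: "homogeneous n N S E" and sf: "safety n N S E"
  shows "regular n N S E"
  unfolding regular_def
proof (intro allI impI ballI)
  fix C f assume C: "C \<subseteq> N" and f: "f \<in> LnF n S"
  define a where "a = E C f"
  define b where "b = E (N - C) (fneg S f)"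
  have nf: "fneg S f \<in> LnF n S" using fneg_in_LnF[OF n f] .
  show "E C f \<le> 1 - E (N - C) (fneg S f)"
  proof (rule ccontr)
    assume "\<not> ?thesis"
    then have "1 - b < a" unfolding a_def b_def by simp
    moreover have "a \<in> Ln n" "1 - b \<in> Ln n"
      unfolding a_def b_def using C f nf by (auto intro: eff_fun_in_Ln one_minus_in_Ln[OF n])
    ultimately obtain bs where bs: "mv_iter bs (1 - b) = 0" "mv_iter bs a = 1"
      and bool: "\<And>z. z \<in> Ln n \<Longrightarrow> mv_iter bs z = 0 \<or> mv_iter bs z = 1"
      using Ln_separating_term[OF n] by metis
    define g where "g = (\<lambda>s\<in>S. mv_iter bs (f s))"
    have g: "g \<in> LnF n S" unfolding g_def using mv_iter_comp_in_LnF[OF n f] .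
    have "E C g = 1" using homogeneous_mv_iter[OF ho C n f] bs a_def g_def by simp
    moreover have "fneg S g = (\<lambda>s\<in>S. mv_iter (map Not bs) (fneg S f s))"
      unfolding g_def fneg_def by (rule restrict_ext) (simp add: mv_iter_dual)
    then have "E (N - C) (fneg S g) = mv_iter (map Not bs) (1 - (1 - b))"
      using homogeneous_mv_iter[OF ho _ n nf] b_def by simp
    then have "E (N - C) (fneg S g) = 1" using mv_iter_dual[of bs "1 - b"] bs by simp
    moreover have "fmin S g (fneg S g) = fconst S 0"
      unfolding fmin_def fconst_def
    proof (rule restrict_ext)
      fix s assume s: "s \<in> S"
      then show "min (g s) (fneg S g s) = 0"
        using bool[OF LnF_apply[OF f s]] by (auto simp: g_def fneg_def)
    qed
    moreover have "C \<union> (N - C) = N" using C by auto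
    ultimately have "1 \<le> E N (fconst S 0)"
      using sa C g fneg_in_LnF[OF n g] unfolding superadditive_def
      by (metis Diff_disjoint Diff_subset min.idem)
    then show False using sf by (simp add: safety_def)
  qed
qed

lemma semi_playable_monotone:
  "semi_playable n N S E \<Longrightarrow> C \<subseteq> N \<Longrightarrow> C \<noteq> N \<Longrightarrow> f \<in> LnF n S \<Longrightarrow> g \<in> LnF n S \<Longrightarrow>
    fle S f g \<Longrightarrow> E C f \<le> E C g"
  by (simp add: semi_playable_def)

lemma semi_playable_bounds:
  "semi_playable n N S E \<Longrightarrow> C \<subseteq> N \<Longrightarrow> C \<noteq> N \<Longrightarrow> E C (fconst S 1) = 1 \<and> E C (fconst S 0) = 0"
  by (simp add: semi_playable_def)

lemma semi_playable_superadditive: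
  "semi_playable n N S E \<Longrightarrow> C1 \<subseteq> N \<Longrightarrow> C2 \<subseteq> N \<Longrightarrow> f \<in> LnF n S \<Longrightarrow> g \<in> LnF n S \<Longrightarrow>
    C1 \<inter> C2 = {} \<Longrightarrow> C1 \<union> C2 \<noteq> N \<Longrightarrow> min (E C1 f) (E C2 g) \<le> E (C1 \<union> C2) (fmin S f g)"
  by (simp add: semi_playable_def)

text \<open>This is how monotonicity, liveness and safety at N are inherited from the empty coalition.\<close>
lemma N_maximal_regular_bounds:
  assumes "regular n N S E" "N_maximal n N S E" "f \<in> LnF n S"
  shows "E N f = 1 - E {} (fneg S f)"
  using assms unfolding regular_def N_maximal_def by (metis Diff_cancel order_antisym subset_refl)

lemma outcome_monotonic_if_semi_playable:
  assumes sp: "semi_playable n N S E" and reg: "regular n N S E" and nm: "N_maximal n N S E"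
    and "N \<noteq> {}"
  shows "outcome_monotonic n N S E"
  unfolding outcome_monotonic_def
proof (intro allI impI ballI)
  fix C f g assume C: "C \<subseteq> N" and f: "f \<in> LnF n S" and g: "g \<in> LnF n S" and "fle S g f"
  show "E C g \<le> E C f"
  proof (cases "C = N")
    case True
    have "fle S (fneg S f) (fneg S g)" using \<open>fle S g f\<close> by (simp add: fle_def fneg_def)
    then have "E {} (fneg S f) \<le> E {} (fneg S g)"
      using semi_playable_monotone[OF sp] fneg_in_LnF[OF n] f g \<open>N \<noteq> {}\<close> by blast
    then show ?thesis using N_maximal_regular_bounds[OF reg nm] f g True by simp
  qed (use semi_playable_monotone[OF sp] C f g \<open>fle S g f\<close> in blast)
qed

lemma liveness_safety_if_semi_playable:
  assumes sp: "semi_playable n N S E" and reg: "regular n N S E" and nm: "N_maximal n N S E"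
    and "N \<noteq> {}"
  shows "liveness n N S E" and "safety n N S E"
proof -
  have E_empty: "E {} (fconst S 1) = 1" "E {} (fconst S 0) = 0"
    using semi_playable_bounds[OF sp] \<open>N \<noteq> {}\<close> by auto
  have "E N (fconst S 1) = 1" "E N (fconst S 0) = 0"
    using N_maximal_regular_bounds[OF reg nm fconst_in_LnF[OF one_in_Ln[OF n]]]
      N_maximal_regular_bounds[OF reg nm fconst_in_LnF[OF zero_in_Ln]] E_empty
    by (simp_all add: fneg_fconst)
  then show "liveness n N S E" "safety n N S E"
    using semi_playable_bounds[OF sp] by (auto simp: liveness_def safety_def)
qed

text \<open>If min (E C1 f) (E C2 g) > E N (f \<and> g) for a partition N = C1 \<union> C2, separate these values by
  a term t. For the Boolean F = t \<circ> f, G = t \<circ> g we get E C1 F = E C2 G = 1 and E N (F \<and> G) = 0;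
  N-maximality, superadditivity of {} and C2, and regularity then give E C1 (\<not> K) = 0 for
  K = \<not> (F \<and> G) \<and> G, although F \<le> \<not> K.\<close>
lemma superadditive_partition:
  assumes sp: "semi_playable n N S E" and ho: "homogeneous n N S E"
    and reg: "regular n N S E" and nm: "N_maximal n N S E" and om: "outcome_monotonic n N S E"
    and C1: "C1 \<subseteq> N" and C2: "C2 \<subseteq> N" and dj: "C1 \<inter> C2 = {}" and un: "C1 \<union> C2 = N"
    and "C2 \<noteq> N" and f: "f \<in> LnF n S" and g: "g \<in> LnF n S"
  shows "min (E C1 f) (E C2 g) \<le> E N (fmin S f g)"
proof (rule ccontr)
  assume "\<not> ?thesis"
  moreover have "E N (fmin S f g) \<in> Ln n" "min (E C1 f) (E C2 g) \<in> Ln n"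
    using eff_fun_in_Ln[OF subset_refl fmin_in_LnF[OF f g]] eff_fun_in_Ln[OF C1 f]
      eff_fun_in_Ln[OF C2 g] by (auto simp: min_def)
  ultimately obtain bs where bs: "mv_iter bs (E N (fmin S f g)) = 0"
      "mv_iter bs (min (E C1 f) (E C2 g)) = 1"
    and bool: "\<And>z. z \<in> Ln n \<Longrightarrow> mv_iter bs z = 0 \<or> mv_iter bs z = 1"
    using Ln_separating_term[OF n] by (metis not_le)
  define F where "F = (\<lambda>s\<in>S. mv_iter bs (f s))"
  define G where "G = (\<lambda>s\<in>S. mv_iter bs (g s))"
  define H where "H = fneg S (fmin S F G)"
  define K where "K = fmin S H G"
  have F: "F \<in> LnF n S" and G: "G \<in> LnF n S"
    unfolding F_def G_def using mv_iter_comp_in_LnF[OF n] f g by auto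
  have H: "H \<in> LnF n S" and K: "K \<in> LnF n S"
    unfolding H_def K_def using F G by (simp_all add: fneg_in_LnF[OF n] fmin_in_LnF)
  have "mv_iter bs (E C1 f) = 1 \<and> mv_iter bs (E C2 g) = 1"
    using bs(2) bool[OF eff_fun_in_Ln[OF C1 f]] bool[OF eff_fun_in_Ln[OF C2 g]]
    unfolding mv_iter_min by (elim disjE) simp_all
  then have EF: "E C1 F = 1" and EG: "E C2 G = 1"
    using homogeneous_mv_iter[OF ho C1 n f] homogeneous_mv_iter[OF ho C2 n g]
    unfolding F_def G_def by simp_all
  have "fmin S F G = (\<lambda>s\<in>S. mv_iter bs (fmin S f g s))"
    unfolding fmin_def F_def G_def by (rule restrict_ext) (simp add: mv_iter_min)
  then have "E N (fmin S F G) = 0"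
    using homogeneous_mv_iter[OF ho subset_refl n fmin_in_LnF[OF f g]] bs(1) by simp
  moreover have "1 - E {} H \<le> E N (fmin S F G)"
    using nm fmin_in_LnF[OF F G] unfolding N_maximal_def H_def by blast
  ultimately have "E {} H = 1"
    using eff_fun_bounds[OF empty_subsetI H] by simp
  then have "E C2 K = 1"
    using semi_playable_superadditive[OF sp empty_subsetI C2 H G] \<open>C2 \<noteq> N\<close> EG
      eff_fun_bounds[OF C2 K] unfolding K_def by simp
  moreover have "N - C2 = C1" using un dj by auto
  moreover have "E C2 K \<le> 1 - E (N - C2) (fneg S K)"
    using reg C2 K unfolding regular_def by blast
  ultimately have "E C1 (fneg S K) \<le> 0" by simp
  moreover have "fle S F (fneg S K)"
    unfolding fle_def
  proof
    fix s assume s: "s \<in> S"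
    then show "F s \<le> fneg S K s"
      using bool[OF LnF_apply[OF f s]] bool[OF LnF_apply[OF g s]]
      by (auto simp: F_def G_def K_def H_def fneg_def fmin_def)
  qed
  then have "E C1 F \<le> E C1 (fneg S K)"
    using om C1 F fneg_in_LnF[OF n K] unfolding outcome_monotonic_def by blast
  ultimately show False using EF by simp
qed

lemma superadditive_if_semi_playable:
  assumes sp: "semi_playable n N S E" and ho: "homogeneous n N S E"
    and reg: "regular n N S E" and nm: "N_maximal n N S E" and "N \<noteq> {}"
  shows "superadditive n N S E"
  unfolding superadditive_def
proof (intro allI impI ballI)
  fix C1 C2 f g assume C1: "C1 \<subseteq> N" and C2: "C2 \<subseteq> N" and f: "f \<in> LnF n S"
    and g: "g \<in> LnF n S" and dj: "C1 \<inter> C2 = {}"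
  note partition = superadditive_partition[OF sp ho reg nm
      outcome_monotonic_if_semi_playable[OF sp reg nm \<open>N \<noteq> {}\<close>]]
  consider "C1 \<union> C2 \<noteq> N" | "C1 \<union> C2 = N" "C2 \<noteq> N" | "C1 = {}" "C2 = N"
    using dj C1 C2 by blast
  then show "min (E C1 f) (E C2 g) \<le> E (C1 \<union> C2) (fmin S f g)"
  proof cases
    case 1
    then show ?thesis using semi_playable_superadditive[OF sp C1 C2 f g dj] by simp
  next
    case 2
    then show ?thesis using partition[OF C1 C2 dj] f g by simp
  next
    case 3
    then show ?thesis
      using partition[OF C2 C1 _ _ _ g f] \<open>N \<noteq> {}\<close> by (simp add: fmin_def min.commute)
  qed
qed

end

theorem mainTheorem7:
  fixes n :: nat and N :: "'a set" and S :: "'s set"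
    and E :: "'a set \<Rightarrow> ('s \<Rightarrow> real) \<Rightarrow> real"
  assumes "0 < n" and "finite N" and "2 \<le> card N"
    and "\<exists>a\<in>S. \<exists>b\<in>S. a \<noteq> b"
    and "eff_fun n N S E"
  shows "playable n N S E \<longleftrightarrow>
    (semi_playable n N S E \<and> homogeneous n N S E \<and> regular n N S E \<and> N_maximal n N S E)"
proof
  assume "playable n N S E"
  moreover have "semi_playable n N S E"
    using \<open>playable n N S E\<close> unfolding playable_def semi_playable_def outcome_monotonic_def
      liveness_def safety_def superadditive_def by auto
  ultimately show "semi_playable n N S E \<and> homogeneous n N S E \<and> regular n N S E \<and> N_maximal n N S E"
    using regular_if_playable[OF assms(1,5)] by (simp add: playable_def)
next
  assume "semi_playable n N S E \<and> homogeneous n N S E \<and> regular n N S E \<and> N_maximal n N S E"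
  moreover have "N \<noteq> {}" using assms(3) by auto
  ultimately show "playable n N S E"
    using outcome_monotonic_if_semi_playable[OF assms(1,5)] liveness_safety_if_semi_playable[OF assms(1,5)]
      superadditive_if_semi_playable[OF assms(1,5)] by (simp add: playable_def)
qed

end
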